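(* Let $p\ge 2$ and $n\ge 1$ be integers. If there exists a $p$-gadget on $n$ vertices, then there exists a $p$-solvable oriented graph on $n\binom{p}{2}+p$ vertices.
   Context: A directed graph $D=(V,E)$ has arcs $E \subseteq \{(u,v)\in V^2 : u \neq v\}$; it is an oriented graph if it never contains both $(u,v)$ and $(v,u)$. $N^-(v)=\{u:(u,v)\in E\}$. For $q\ge2$ let $[q]=\{0,\dots,q-1\}$. A $D$-function over $[q]$ is a map $f=(f_v)_{v\in V}:[q]^V\to[q]^V$ with each $f_v(x)$ depending only on $(x_u)_{u\in N^-(v)}$. $D$ is $q$-solvable if some $D$-function $f$ over $[q]$ has the property that for every $x\in[q]^V$ there is $v$ with $f_v(x)=x_v$. A $q$-gadget is an oriented graph $D$ with vertices labelled $1,\dots,n$ which is not $q$-solvable, but for which there exist a $D$-function $f$ over $[q]$ and a function $\phi:[q]^{n-1}\to[q]$ such that every $x\in[q]^n$ with $f_v(x)\ne x_v$ for all $v$ satisfies $x_1=\phi(x_2,\dots,x_n)$. *)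

theory Defs
  imports Main "HOL-Library.FuncSet"
begin

text \<open>A digraph on n vertices has vertex set {0..<n} (nat) and arc set E.
  Vertex label i (1..n) of the paper corresponds to vertex i-1 here.\<close>

definition oriented_graph :: "nat \<Rightarrow> (nat \<times> nat) set \<Rightarrow> bool" where
  "oriented_graph n E \<longleftrightarrow> E \<subseteq> {0..<n} \<times> {0..<n}
     \<and> (\<forall>u v. (u, v) \<in> E \<longrightarrow> u \<noteq> v)
     \<and> (\<forall>u v. (u, v) \<in> E \<longrightarrow> (v, u) \<notin> E)"

definition in_nbrs :: "(nat \<times> nat) set \<Rightarrow> nat \<Rightarrow> nat set" where
  "in_nbrs E v = {u. (u, v) \<in> E}"

definition configs :: "nat \<Rightarrow> nat \<Rightarrow> (nat \<Rightarrow> nat) set" where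
  "configs q n = {0..<n} \<rightarrow>\<^sub>E {0..<q}"

definition D_function :: "nat \<Rightarrow> nat \<Rightarrow> (nat \<times> nat) set \<Rightarrow> ((nat \<Rightarrow> nat) \<Rightarrow> nat \<Rightarrow> nat) \<Rightarrow> bool" where
  "D_function q n E f \<longleftrightarrow>
     (\<forall>x \<in> configs q n. \<forall>v < n. f x v < q)
     \<and> (\<forall>v < n. \<forall>x \<in> configs q n. \<forall>y \<in> configs q n.
          (\<forall>u \<in> in_nbrs E v. x u = y u) \<longrightarrow> f x v = f y v)"

definition solvable :: "nat \<Rightarrow> nat \<Rightarrow> (nat \<times> nat) set \<Rightarrow> bool" where
  "solvable q n E \<longleftrightarrow>
     (\<exists>f. D_function q n E f \<and> (\<forall>x \<in> configs q n. \<exists>v < n. f x v = x v))"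

text \<open>q-gadget: vertex 1 of the paper is vertex 0 here; phi takes (x_2,...,x_n),
  i.e. the restriction of x to {1..<n}.\<close>
definition gadget :: "nat \<Rightarrow> nat \<Rightarrow> (nat \<times> nat) set \<Rightarrow> bool" where
  "gadget q n E \<longleftrightarrow> oriented_graph n E \<and> \<not> solvable q n E
     \<and> (\<exists>f phi. D_function q n E f
          \<and> phi \<in> ({1..<n} \<rightarrow>\<^sub>E {0..<q}) \<rightarrow> {0..<q}
          \<and> (\<forall>x \<in> configs q n. (\<forall>v < n. f x v \<noteq> x v)
                 \<longrightarrow> x 0 = phi (restrict x {1..<n})))"

end

theory Submission
  imports Defs
begin

text \<open>Start from the complete-graph strategy for p players: player i guesses
  i minus the sum of the others' values, so player (sum of all values mod p) is right.
  On the transitive tournament 0 < 1 < ... < p-1 player i sees only the players j < i.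
  For each t < p - 1 add a copy of the gadget, dominated by t + 1 and dominating 0, ..., t,
  whose first vertex reads its value shifted by x_(t+1).  If no vertex of that copy is
  fixed, the gadget equation x_1 = phi(x_2, ..., x_n) of the copy reveals x_(t+1) to the
  players 0, ..., t.  So if no copy has a fixed vertex, every clique player effectively
  sees all other clique players, and the complete-graph strategy produces a fixed vertex.
  This uses p + (p - 1) n \<le> n (p choose 2) + p vertices; the rest are isolated.\<close>

lemma D_function_less:
  "D_function q n E f \<Longrightarrow> x \<in> configs q n \<Longrightarrow> v < n \<Longrightarrow> f x v < q"
  unfolding D_function_def by blast

lemma D_function_local:
  "D_function q n E f \<Longrightarrow> v < n \<Longrightarrow> x \<in> configs q n \<Longrightarrow> y \<in> configs q n
    \<Longrightarrow> (\<And>u. (u, v) \<in> E \<Longrightarrow> x u = y u) \<Longrightarrow> f x v = f y v"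
  unfolding D_function_def in_nbrs_def by blast

lemma configs_less: "x \<in> configs q m \<Longrightarrow> v < m \<Longrightarrow> x v < q"
  unfolding configs_def by auto

lemma mod_add_eq_iff_eq_mod_diff:
  fixes a b c p :: nat
  assumes "a < p" "b < p" "c < p"
  shows "(a + b) mod p = c \<longleftrightarrow> a = (c + p - b) mod p"
proof -
  have "(a + b) mod p = (if a + b < p then a + b else a + b - p)"
    using assms by (simp add: mod_if le_mod_geq)
  moreover have "(c + p - b) mod p = (if b \<le> c then c - b else c + p - b)"
    using assms by (simp add: mod_if)
  ultimately show ?thesis using assms by auto
qed

lemma sum_strategy_correct:
  fixes x :: "nat \<Rightarrow> nat"
  assumes "p > 0" and "\<forall>j<p. x j < p"
  defines "i \<equiv> (\<Sum>j<p. x j) mod p"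
  shows "(i + (p - 1) * (\<Sum>j\<in>{..<p} - {i}. x j)) mod p = x i"
proof -
  have ip: "i < p" unfolding i_def using assms(1) by simp
  define R where "R = (\<Sum>j\<in>{..<p} - {i}. x j)"
  have "(i + (p - 1) * R) mod p = ((\<Sum>j<p. x j) + (p - 1) * R) mod p"
    unfolding i_def by (rule mod_add_left_eq)
  also have "(\<Sum>j<p. x j) = x i + R"
    unfolding R_def using ip by (simp add: sum.remove)
  also have "x i + R + (p - 1) * R = x i + p * R"
    using assms(1) by (cases p) auto
  finally show ?thesis
    unfolding R_def using assms(2) ip by simp
qed

lemma pred_le_choose_two: "p - 1 \<le> p choose 2"
proof (cases "p \<le> 1")
  case False
  then have "2 * (p - 1) \<le> p * (p - 1)" by (intro mult_right_mono) auto
  then show ?thesis unfolding choose_two by linarith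
qed auto

lemma block_vertex_inj:
  fixes n :: nat
  assumes "a < n" "c < n" "p + t * n + a = p + s * n + c"
  shows "t = s \<and> a = c"
proof -
  have "t * n + a = s * n + c" using assms(3) by simp
  moreover have "(t * n + a) div n = t" "(t * n + a) mod n = a"
                "(s * n + c) div n = s" "(s * n + c) mod n = c"
    using assms(1,2) by simp_all
  ultimately show ?thesis by metis
qed

lemma block_vertex_less:
  fixes n :: nat
  assumes "t + 1 < p" "k < n"
  shows "p + t * n + k < p + (p - 1) * n"
proof -
  have "t * n + k < (t + 1) * n" using assms by simp
  also have "\<dots> \<le> (p - 1) * n" using assms by (intro mult_right_mono) auto
  finally show ?thesis by simp
qed

lemma block_vertexE:
  fixes n :: nat
  assumes "p \<le> v" "v < p + (p - 1) * n"
  obtains t k where "t + 1 < p" "k < n" "v = p + t * n + k"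
proof
  have "n > 0" using assms by (cases n) auto
  then show "(v - p) mod n < n" by simp
  have "v - p < (p - 1) * n" using assms by simp
  then have "(v - p) div n < p - 1" by (rule less_mult_imp_div_less)
  then show "(v - p) div n + 1 < p" by simp
  show "v = p + (v - p) div n * n + (v - p) mod n" using assms by simp
qed

text \<open>Vertices 0, ..., p-1 form a transitive tournament.  For t < p - 1 the vertices
  p + t n + k (k < n) carry copy t of the gadget; its vertex k plays the gadget vertex k.\<close>

definition blowup_arcs :: "nat \<Rightarrow> nat \<Rightarrow> (nat \<times> nat) set \<Rightarrow> (nat \<times> nat) set" where
  "blowup_arcs p n E =
     {(i, j). i < j \<and> j < p}
   \<union> {(t + 1, p + t * n + k) | t k. t + 1 < p \<and> k < n}
   \<union> {(p + t * n + k, i) | t k i. t + 1 < p \<and> k < n \<and> i \<le> t}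
   \<union> {(p + t * n + a, p + t * n + c) | t a c. t + 1 < p \<and> (a, c) \<in> E}"

lemma blowup_arcsE:
  assumes "(u, v) \<in> blowup_arcs p n E"
  obtains "u < v" "v < p"
  | t k where "t + 1 < p" "k < n" "u = t + 1" "v = p + t * n + k"
  | t k where "t + 1 < p" "k < n" "u = p + t * n + k" "v \<le> t"
  | t a c where "t + 1 < p" "(a, c) \<in> E" "u = p + t * n + a" "v = p + t * n + c"
  using assms unfolding blowup_arcs_def by blast

lemma blowup_arcs_oriented:
  assumes og: "oriented_graph n E" and N: "p + (p - 1) * n \<le> N"
  shows "oriented_graph N (blowup_arcs p n E)"
proof -
  have E: "(a, c) \<in> E \<Longrightarrow> a < n \<and> c < n \<and> a \<noteq> c \<and> (c, a) \<notin> E" for a c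
    using og unfolding oriented_graph_def by auto
  have block: "t + 1 < p \<Longrightarrow> k < n \<Longrightarrow> p + t * n + k < N" for t k
    using block_vertex_less[of t p k n] N by linarith
  have range: "u < N \<and> v < N" if "(u, v) \<in> blowup_arcs p n E" for u v
    using that N by (cases rule: blowup_arcsE) (use block E in fastforce)+
  have irrefl: "u \<noteq> v" if "(u, v) \<in> blowup_arcs p n E" for u v
    using that by (cases rule: blowup_arcsE) (use E in auto)
  have asym: False if "(u, v) \<in> blowup_arcs p n E" "(v, u) \<in> blowup_arcs p n E" for u v
    using that(1)
  proof (cases rule: blowup_arcsE)
    case 1
    from that(2) show False by (cases rule: blowup_arcsE) (use 1 in auto)
  next
    case (2 t k)
    from that(2) show False
    proof (cases rule: blowup_arcsE)
      case (3 s k')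
      with 2 have "t = s" using block_vertex_inj[of k n k' p t s] by simp
      with 2 3 show False by simp
    qed (use 2 in auto)
  next
    case (3 t k)
    from that(2) show False
    proof (cases rule: blowup_arcsE)
      case (2 s k')
      with 3 have "t = s" using block_vertex_inj[of k n k' p t s] by simp
      with 2 3 show False by simp
    qed (use 3 in auto)
  next
    case (4 t a c)
    from that(2) show False
    proof (cases rule: blowup_arcsE)
      case (4 s a' c')
      have "a < n" "c < n" "a' < n" "c' < n" using E \<open>(a, c) \<in> E\<close> 4 by auto
      with \<open>u = p + t * n + a\<close> \<open>v = p + t * n + c\<close> 4 have "c = a'" "a = c'"
        using block_vertex_inj[of c n a' p t s] block_vertex_inj[of a n c' p t s] by auto
      with 4 \<open>(a, c) \<in> E\<close> show False using E by blast
    qed (use 4 in auto)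
  qed
  have "blowup_arcs p n E \<subseteq> {0..<N} \<times> {0..<N}" using range by fastforce
  then show ?thesis
    unfolding oriented_graph_def using irrefl asym by blast
qed

definition shifted_copy :: "nat \<Rightarrow> nat \<Rightarrow> (nat \<Rightarrow> nat) \<Rightarrow> nat \<Rightarrow> nat \<Rightarrow> nat" where
  "shifted_copy p n x t =
     restrict (\<lambda>k. if k = 0 then (x (p + t * n) + p - x (t + 1)) mod p else x (p + t * n + k))
       {0..<n}"

text \<open>What copy t forces x_(t+1) to be, provided none of its vertices is fixed.\<close>

definition copy_prediction ::
  "nat \<Rightarrow> nat \<Rightarrow> ((nat \<Rightarrow> nat) \<Rightarrow> nat) \<Rightarrow> (nat \<Rightarrow> nat) \<Rightarrow> nat \<Rightarrow> nat" where
  "copy_prediction p n phi x t =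
     (x (p + t * n) + p - phi (restrict (\<lambda>k. x (p + t * n + k)) {1..<n})) mod p"

text \<open>The value clique vertex i uses for clique vertex j: copy j - 1 stands in for
  the invisible vertices j > i.\<close>

definition clique_view ::
  "nat \<Rightarrow> nat \<Rightarrow> ((nat \<Rightarrow> nat) \<Rightarrow> nat) \<Rightarrow> (nat \<Rightarrow> nat) \<Rightarrow> nat \<Rightarrow> nat \<Rightarrow> nat" where
  "clique_view p n phi x i j = (if j \<le> i then x j else copy_prediction p n phi x (j - 1))"

text \<open>On the clique, (p - 1) * s stands for -s modulo p.\<close>

definition blowup_fun ::
  "nat \<Rightarrow> nat \<Rightarrow> ((nat \<Rightarrow> nat) \<Rightarrow> nat \<Rightarrow> nat) \<Rightarrow> ((nat \<Rightarrow> nat) \<Rightarrow> nat)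
     \<Rightarrow> (nat \<Rightarrow> nat) \<Rightarrow> nat \<Rightarrow> nat" where
  "blowup_fun p n f phi x v =
     (if v < p then (v + (p - 1) * (\<Sum>j\<in>{..<p} - {v}. clique_view p n phi x v j)) mod p
      else if v < p + (p - 1) * n then
        (let t = (v - p) div n; k = (v - p) mod n; y = shifted_copy p n x t in
         if k = 0 then (f y 0 + x (t + 1)) mod p else f y k)
      else 0)"

lemma blowup_fun_clique:
  "v < p \<Longrightarrow> blowup_fun p n f phi x v
     = (v + (p - 1) * (\<Sum>j\<in>{..<p} - {v}. clique_view p n phi x v j)) mod p"
  unfolding blowup_fun_def by simp

lemma blowup_fun_block:
  fixes n :: nat
  assumes "t + 1 < p" "k < n"
  shows "blowup_fun p n f phi x (p + t * n + k) =
     (if k = 0 then (f (shifted_copy p n x t) 0 + x (t + 1)) mod p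
      else f (shifted_copy p n x t) k)"
  using block_vertex_less[OF assms] assms unfolding blowup_fun_def Let_def by simp

lemma configs_block_less:
  fixes n :: nat
  assumes "x \<in> configs p N" "p + (p - 1) * n \<le> N" "t + 1 < p" "k < n"
  shows "x (p + t * n + k) < p"
  using configs_less[OF assms(1)] block_vertex_less[OF assms(3,4)] assms(2) by simp

lemma shifted_copy_configs:
  fixes n :: nat
  assumes x: "x \<in> configs p N" and N: "p + (p - 1) * n \<le> N" and t: "t + 1 < p"
  shows "shifted_copy p n x t \<in> configs p n"
  using configs_block_less[OF x N t] t unfolding configs_def shifted_copy_def by auto

lemma blowup_fun_block_fixed_iff:
  fixes n :: nat
  assumes x: "x \<in> configs p N" and N: "p + (p - 1) * n \<le> N"
    and t: "t + 1 < p" and k: "k < n"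
    and f: "f (shifted_copy p n x t) k < p"
  shows "blowup_fun p n f phi x (p + t * n + k) = x (p + t * n + k)
     \<longleftrightarrow> f (shifted_copy p n x t) k = shifted_copy p n x t k"
proof (cases "k = 0")
  case True
  have "x (p + t * n) < p" "x (t + 1) < p"
    using configs_block_less[OF x N t k] configs_less[OF x] N t True by auto
  then show ?thesis
    using True blowup_fun_block[OF t k] mod_add_eq_iff_eq_mod_diff[OF f] k
    unfolding shifted_copy_def by simp
qed (use blowup_fun_block[OF t k] k in \<open>simp add: shifted_copy_def\<close>)

lemma copy_prediction_eq:
  fixes n :: nat
  assumes x: "x \<in> configs p N" and N: "p + (p - 1) * n \<le> N" and t: "t + 1 < p"
    and n: "n > 0"
    and f: "D_function p n E f"
    and phi: "\<forall>y\<in>configs p n. (\<forall>k<n. f y k \<noteq> y k) \<longrightarrow> y 0 = phi (restrict y {1..<n})"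
    and no_fixed: "\<forall>k<n. blowup_fun p n f phi x (p + t * n + k) \<noteq> x (p + t * n + k)"
  shows "copy_prediction p n phi x t = x (t + 1)"
proof -
  define y where "y = shifted_copy p n x t"
  have y: "y \<in> configs p n" unfolding y_def by (rule shifted_copy_configs[OF x N t])
  have "f y k \<noteq> y k" if "k < n" for k
  proof -
    have "f y k < p" using D_function_less[OF f y that] .
    then show ?thesis
      using no_fixed blowup_fun_block_fixed_iff[OF x N t that] that unfolding y_def by blast
  qed
  then have "y 0 = phi (restrict y {1..<n})" using phi y by blast
  moreover have "restrict y {1..<n} = restrict (\<lambda>k. x (p + t * n + k)) {1..<n}"
    unfolding y_def shifted_copy_def by (auto simp: restrict_def)
  ultimately have P: "phi (restrict (\<lambda>k. x (p + t * n + k)) {1..<n})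
      = (x (p + t * n) + p - x (t + 1)) mod p"
    using n unfolding y_def shifted_copy_def by simp
  define P where "P = phi (restrict (\<lambda>k. x (p + t * n + k)) {1..<n})"
  have B: "x (p + t * n) < p" and J: "x (t + 1) < p"
    using configs_block_less[OF x N t n] configs_less[OF x] N t by auto
  have "P < p" unfolding P_def P using t by simp
  have "(P + x (t + 1)) mod p = x (p + t * n)"
    using mod_add_eq_iff_eq_mod_diff[OF \<open>P < p\<close> J B] P unfolding P_def by simp
  then have "x (t + 1) = (x (p + t * n) + p - P) mod p"
    using mod_add_eq_iff_eq_mod_diff[OF J \<open>P < p\<close> B] by (simp add: add.commute)
  then show ?thesis unfolding copy_prediction_def P_def by simp
qed

lemma blowup_fun_has_fixed_point:
  fixes n :: nat
  assumes x: "x \<in> configs p N" and N: "p + (p - 1) * n \<le> N"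
    and p: "p \<ge> 2" and n: "n > 0"
    and f: "D_function p n E f"
    and phi: "\<forall>y\<in>configs p n. (\<forall>k<n. f y k \<noteq> y k) \<longrightarrow> y 0 = phi (restrict y {1..<n})"
  shows "\<exists>v<N. blowup_fun p n f phi x v = x v"
proof (rule ccontr)
  assume "\<not> ?thesis"
  then have no_fixed: "\<forall>v<N. blowup_fun p n f phi x v \<noteq> x v" by blast
  have prediction: "copy_prediction p n phi x t = x (t + 1)" if t: "t + 1 < p" for t
    using copy_prediction_eq[OF x N t n f phi] no_fixed block_vertex_less[OF t] N
    by (meson less_le_trans)
  have view: "clique_view p n phi x i j = x j" if "j < p" for i j
    using that prediction[of "j - 1"] unfolding clique_view_def by auto
  have xp: "\<forall>j<p. x j < p" using configs_less[OF x] N by simp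
  define i where "i = (\<Sum>j<p. x j) mod p"
  have i: "i < p" unfolding i_def using p by simp
  have "blowup_fun p n f phi x i = (i + (p - 1) * (\<Sum>j\<in>{..<p} - {i}. x j)) mod p"
    using blowup_fun_clique[OF i] view by simp
  also have "\<dots> = x i"
    unfolding i_def using sum_strategy_correct[OF _ xp] p by simp
  finally show False using no_fixed i N by simp
qed

lemma blowup_fun_less:
  fixes n :: nat
  assumes x: "x \<in> configs p N" and N: "p + (p - 1) * n \<le> N"
    and f: "D_function p n E f" and p: "p > 0"
  shows "blowup_fun p n f phi x v < p"
proof -
  consider "v < p" | "p \<le> v" "v < p + (p - 1) * n" | "\<not> v < p + (p - 1) * n" by linarith
  then show ?thesis
  proof cases
    case 1
    then show ?thesis using blowup_fun_clique[OF 1] by simp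
  next
    case 2
    then obtain t k where tk: "t + 1 < p" "k < n" "v = p + t * n + k" by (rule block_vertexE)
    have "f (shifted_copy p n x t) k < p"
      using D_function_less[OF f shifted_copy_configs[OF x N tk(1)] tk(2)] .
    then show ?thesis using blowup_fun_block[OF tk(1,2)] tk by simp
  next
    case 3
    then show ?thesis using p unfolding blowup_fun_def by auto
  qed
qed

lemma copy_prediction_cong:
  fixes n :: nat
  assumes "n > 0" and "\<And>k. k < n \<Longrightarrow> x (p + t * n + k) = y (p + t * n + k)"
  shows "copy_prediction p n phi x t = copy_prediction p n phi y t"
proof -
  have "restrict (\<lambda>k. x (p + t * n + k)) {1..<n} = restrict (\<lambda>k. y (p + t * n + k)) {1..<n}"
    using assms(2) by (auto simp: restrict_def)
  then show ?thesis using assms(2)[OF assms(1)] unfolding copy_prediction_def by simp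
qed

lemma blowup_fun_local:
  fixes n :: nat
  assumes og: "oriented_graph n E" and f: "D_function p n E f"
    and N: "p + (p - 1) * n \<le> N" and n: "n > 0"
    and x: "x \<in> configs p N" and y: "y \<in> configs p N"
    and agree: "\<And>u. (u, v) \<in> blowup_arcs p n E \<Longrightarrow> x u = y u"
  shows "blowup_fun p n f phi x v = blowup_fun p n f phi y v"
proof -
  consider "v < p" | "p \<le> v" "v < p + (p - 1) * n" | "\<not> v < p + (p - 1) * n" by linarith
  then show ?thesis
  proof cases
    case 1
    have "clique_view p n phi x v j = clique_view p n phi y v j" if j: "j \<in> {..<p} - {v}" for j
    proof (cases "j < v")
      case True
      then have "(j, v) \<in> blowup_arcs p n E" using 1 unfolding blowup_arcs_def by blast
      then show ?thesis using True unfolding clique_view_def by (simp add: agree)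
    next
      case False
      define t where "t = j - 1"
      have t: "t + 1 < p" "v \<le> t" "j = t + 1" using j False unfolding t_def by auto
      have "(p + t * n + k, v) \<in> blowup_arcs p n E" if "k < n" for k
        using t that unfolding blowup_arcs_def by blast
      then have "copy_prediction p n phi x t = copy_prediction p n phi y t"
        using copy_prediction_cong[OF n] agree by blast
      then show ?thesis using t unfolding clique_view_def by simp
    qed
    then show ?thesis using blowup_fun_clique[OF 1] by (metis (no_types, lifting) sum.cong)
  next
    case 2
    then obtain t k where tk: "t + 1 < p" "k < n" "v = p + t * n + k" by (rule block_vertexE)
    have "(t + 1, v) \<in> blowup_arcs p n E" using tk unfolding blowup_arcs_def by blast
    then have head: "x (t + 1) = y (t + 1)" by (rule agree)
    have "shifted_copy p n x t u = shifted_copy p n y t u" if uk: "(u, k) \<in> E" for u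
    proof -
      have "u < n" using og uk unfolding oriented_graph_def by auto
      moreover have "(p + t * n + u, v) \<in> blowup_arcs p n E"
        using uk tk unfolding blowup_arcs_def by blast
      then have "x (p + t * n + u) = y (p + t * n + u)" by (rule agree)
      ultimately show ?thesis using head unfolding shifted_copy_def by auto
    qed
    then have "f (shifted_copy p n x t) k = f (shifted_copy p n y t) k"
      using D_function_local[OF f tk(2) shifted_copy_configs[OF x N tk(1)]
          shifted_copy_configs[OF y N tk(1)]] by blast
    then show ?thesis using blowup_fun_block[OF tk(1,2)] tk(3) head by (cases "k = 0") simp_all
  next
    case 3
    then show ?thesis unfolding blowup_fun_def by auto
  qed
qed

lemma blowup_fun_D_function:
  fixes n :: nat
  assumes "oriented_graph n E" "D_function p n E f" "p + (p - 1) * n \<le> N" "n > 0"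
    and "p > 0"
  shows "D_function p N (blowup_arcs p n E) (blowup_fun p n f phi)"
  using blowup_fun_less[OF _ assms(3,2,5)] blowup_fun_local[OF assms(1-4)]
  unfolding D_function_def in_nbrs_def by blast

lemma blowup_solvable:
  fixes n :: nat
  assumes "p \<ge> 2" "n > 0" "p + (p - 1) * n \<le> N"
    and "oriented_graph n E" "D_function p n E f"
    and "\<forall>y\<in>configs p n. (\<forall>k<n. f y k \<noteq> y k) \<longrightarrow> y 0 = phi (restrict y {1..<n})"
  shows "solvable p N (blowup_arcs p n E)"
proof -
  have "D_function p N (blowup_arcs p n E) (blowup_fun p n f phi)"
    using blowup_fun_D_function[OF assms(4,5,3,2)] assms(1) by simp
  then show ?thesis
    unfolding solvable_def using blowup_fun_has_fixed_point[OF _ assms(3,1,2,5,6)] by blast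
qed

theorem lemma8:
  fixes p n :: nat
  assumes "p \<ge> 2" and "n \<ge> 1"
    and "\<exists>E. gadget p n E"
  shows "\<exists>E'. oriented_graph (n * (p choose 2) + p) E'
              \<and> solvable p (n * (p choose 2) + p) E'"
proof -
  obtain E f phi where E: "oriented_graph n E" and f: "D_function p n E f"
    and phi: "\<forall>y\<in>configs p n. (\<forall>k<n. f y k \<noteq> y k) \<longrightarrow> y 0 = phi (restrict y {1..<n})"
    using assms(3) unfolding gadget_def by blast
  have N: "p + (p - 1) * n \<le> n * (p choose 2) + p"
    using mult_le_mono1[OF pred_le_choose_two, of p n] by (simp add: mult.commute)
  have "n > 0" using assms(2) by simp
  show ?thesis
    using blowup_arcs_oriented[OF E N] blowup_solvable[OF assms(1) \<open>n > 0\<close> N E f phi] by blast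
qed

end
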